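(* The set $\mathcal{I}_{\mathrm{str}}(\Lambda \cap T_1)$ has the cardinality of the continuum.
   Context: Let $\mathbf{2}=\{0,1\}$. A partial function of arity $n$ on $\mathbf{2}$ is a map $f:\operatorname{dom} f\to\mathbf{2}$ with $\operatorname{dom} f\subseteq \mathbf{2}^n$; it is total if $\operatorname{dom} f=\mathbf{2}^n$. $P_{\mathbf{2}}$ is the set of all partial functions, $O_{\mathbf{2}}$ the set of total ones. Composition $F=f(g_1,\dots,g_n)$ is given by $F(\mathbf{x})=f(g_1(\mathbf{x}),\dots,g_n(\mathbf{x}))$ on $\operatorname{dom} F=\{\mathbf{x}\in\bigcap_i\operatorname{dom} g_i : (g_1(\mathbf{x}),\dots,g_n(\mathbf{x}))\in\operatorname{dom} f\}$. A partial clone is a composition-closed subset of $P_{\mathbf{2}}$ containing all projections; a total clone is one contained in $O_{\mathbf{2}}$. A partial clone $X$ is strong if it contains every restriction of each of its members. For a total clone $C$, $\mathcal{I}_{\mathrm{str}}(C)$ is the set of all strong partial clones $X$ with $X\cap O_{\mathbf{2}}=C$. $\Lambda$ is the total clone generated by $\land$ and the constants $c_0,c_1$; $T_1$ is the clone of total Boolean functions $f$ with $f(1,\dots,1)=1$. *)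

theory Defs
  imports Complex_Main
begin

text \<open>A partial Boolean function is a pair (n, f): n is the arity and
  f maps argument tuples (lists of length n) to Some value on its domain,
  None outside.  Arities are n >= 1.\<close>

type_synonym pfun = "nat \<times> (bool list \<Rightarrow> bool option)"

definition P2 :: "pfun set" where
  "P2 = {f. fst f \<ge> 1 \<and> (\<forall>xs. length xs \<noteq> fst f \<longrightarrow> snd f xs = None)}"

definition O2 :: "pfun set" where
  "O2 = {f \<in> P2. \<forall>xs. length xs = fst f \<longrightarrow> snd f xs \<noteq> None}"

definition proj :: "nat \<Rightarrow> nat \<Rightarrow> pfun" where
  "proj n i = (n, \<lambda>xs. if length xs = n then Some (xs ! i) else None)"

definition compose :: "pfun \<Rightarrow> pfun list \<Rightarrow> nat \<Rightarrow> pfun" where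
  "compose f gs m = (m, \<lambda>xs. if length xs = m then
      (case those (map (\<lambda>g. snd g xs) gs) of None \<Rightarrow> None | Some ys \<Rightarrow> snd f ys)
     else None)"

definition partial_clone :: "pfun set \<Rightarrow> bool" where
  "partial_clone X \<longleftrightarrow> X \<subseteq> P2
     \<and> (\<forall>n i. 1 \<le> n \<longrightarrow> i < n \<longrightarrow> proj n i \<in> X)
     \<and> (\<forall>f gs m. f \<in> X \<longrightarrow> length gs = fst f \<longrightarrow>
           (\<forall>g\<in>set gs. g \<in> X \<and> fst g = m) \<longrightarrow> compose f gs m \<in> X)"

definition total_clone :: "pfun set \<Rightarrow> bool" where
  "total_clone X \<longleftrightarrow> partial_clone X \<and> X \<subseteq> O2"

definition restriction_of :: "pfun \<Rightarrow> pfun \<Rightarrow> bool" where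
  "restriction_of g f \<longleftrightarrow> g \<in> P2 \<and> fst g = fst f \<and>
     (\<forall>xs v. snd g xs = Some v \<longrightarrow> snd f xs = Some v)"

definition strong :: "pfun set \<Rightarrow> bool" where
  "strong X \<longleftrightarrow> (\<forall>f\<in>X. \<forall>g. restriction_of g f \<longrightarrow> g \<in> X)"

inductive_set clone_gen :: "pfun set \<Rightarrow> pfun set" for F where
  gen: "f \<in> F \<Longrightarrow> f \<in> clone_gen F"
| proj: "1 \<le> n \<Longrightarrow> i < n \<Longrightarrow> proj n i \<in> clone_gen F"
| comp: "f \<in> clone_gen F \<Longrightarrow> length gs = fst f \<Longrightarrow>
     (\<And>g. g \<in> set gs \<Longrightarrow> g \<in> clone_gen F \<and> fst g = m) \<Longrightarrow>
     compose f gs m \<in> clone_gen F"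

definition and2 :: pfun where
  "and2 = (2, \<lambda>xs. if length xs = 2 then Some (xs ! 0 \<and> xs ! 1) else None)"

definition const1 :: "bool \<Rightarrow> pfun" where
  "const1 b = (1, \<lambda>xs. if length xs = 1 then Some b else None)"

definition Lambda :: "pfun set" where
  "Lambda = clone_gen {and2, const1 False, const1 True}"

definition T1 :: "pfun set" where
  "T1 = {f \<in> O2. snd f (replicate (fst f) True) = Some True}"

definition I_str :: "pfun set \<Rightarrow> pfun set set" where
  "I_str C = {X. partial_clone X \<and> strong X \<and> X \<inter> O2 = C}"

end

theory Submission
  imports Defs "HOL-Analysis.Abstract_Topology_2"
begin

text \<open>The total functions in \<open>\<Lambda> \<inter> T\<^sub>1\<close> are exactly the conjunctions of variables (including
  the empty one), i.e.\ the total meet homomorphisms fixing the all-ones tuple.  For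
  \<open>S \<subseteq> \<nat>\<close> consider the partial functions preserving the relation \<open>{(x, y, x \<and> y, 1)}\<close> and the
  relations \<open>\<rho>\<^sub>n\<close>, \<open>n - 5 \<in> S\<close>, where \<open>\<rho>\<^sub>n\<close> consists of the vectors telling which of the
  two-element subsets of \<open>{..<n}\<close> and \<open>{..<n}\<close> itself avoid a fixed set.  Sets of
  polymorphisms are strong partial clones; the first relation forces the total members to be
  conjunctions, and all these relations are closed under conjunction, so the total part is
  \<open>\<Lambda> \<inter> T\<^sub>1\<close>.  The partial function \<open>g\<^sub>m\<close> defined only on tuples with exactly two zeros
  (value 1) and on the all-zero tuple (value 0) preserves \<open>\<rho>\<^sub>n\<close> (\<open>m, n \<ge> 5\<close>) iff \<open>m \<noteq> n\<close>, so
  distinct \<open>S\<close> give distinct clones.  Since there are only countably many partial functions,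
  there are at most continuum many clones.\<close>

lemma those_map_eq_Some:
  "those (map h xs) = Some ys \<longleftrightarrow> (\<forall>x\<in>set xs. h x \<noteq> None) \<and> ys = map (\<lambda>x. the (h x)) xs"
  by (induction xs arbitrary: ys) (auto split: option.splits)

lemma those_map_eq_None:
  "those (map h xs) = None \<longleftrightarrow> (\<exists>x\<in>set xs. h x = None)"
  by (induction xs) (auto split: option.splits)

lemma snd_compose_eq:
  assumes "length xs = m" and "\<forall>g\<in>set gs. snd g xs \<noteq> None"
  shows "snd (Defs.compose f gs m) xs = snd f (map (\<lambda>g. the (snd g xs)) gs)"
proof -
  have "those (map (\<lambda>g. snd g xs) gs) = Some (map (\<lambda>g. the (snd g xs)) gs)"
    using assms(2) by (simp add: those_map_eq_Some)
  then show ?thesis using assms(1) by (simp add: Defs.compose_def)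
qed

lemma O2_iff: "f \<in> O2 \<longleftrightarrow> 1 \<le> fst f \<and> (\<forall>xs. snd f xs \<noteq> None \<longleftrightarrow> length xs = fst f)"
  unfolding O2_def P2_def by auto

lemma proj_in_O2: "1 \<le> n \<Longrightarrow> proj n i \<in> O2"
  unfolding O2_iff proj_def by auto

lemma compose_in_P2:
  assumes "f \<in> P2" and "length gs = fst f" and "\<forall>g\<in>set gs. g \<in> P2 \<and> fst g = m"
  shows "Defs.compose f gs m \<in> P2"
proof -
  obtain g where "g \<in> set gs"
    using assms(1,2) unfolding P2_def by (cases gs) auto
  then have "1 \<le> m" using assms(3) unfolding P2_def by auto
  then show ?thesis unfolding P2_def Defs.compose_def by auto
qed

lemma compose_in_O2:
  assumes f: "f \<in> O2" and "length gs = fst f" and gs: "\<forall>g\<in>set gs. g \<in> O2 \<and> fst g = m"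
  shows "Defs.compose f gs m \<in> O2"
proof -
  have "Defs.compose f gs m \<in> P2"
    using assms compose_in_P2[of f gs m] unfolding O2_def by auto
  moreover have "snd (Defs.compose f gs m) xs \<noteq> None" if "length xs = m" for xs
  proof -
    have "\<forall>g\<in>set gs. snd g xs \<noteq> None" using gs that unfolding O2_iff by auto
    then show ?thesis
      using that f assms(2) snd_compose_eq[OF that] unfolding O2_iff by auto
  qed
  ultimately show ?thesis unfolding O2_def by (simp add: Defs.compose_def)
qed

section \<open>Preservation of relations\<close>

text \<open>A relation of arity \<open>|I|\<close> is a predicate on Boolean vectors \<open>'i \<Rightarrow> bool\<close> that
  only looks at the coordinates in \<open>I\<close>.  A partial function preserves it if, applied row by
  row to relation members (the columns \<open>cs\<close>), it yields a member whenever it is defined on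
  every row indexed by \<open>I\<close>.\<close>

definition depends_only_on :: "'i set \<Rightarrow> (('i \<Rightarrow> bool) \<Rightarrow> bool) \<Rightarrow> bool" where
  "depends_only_on I R \<longleftrightarrow> (\<forall>v w. (\<forall>i\<in>I. v i = w i) \<longrightarrow> R v = R w)"

definition preserves :: "pfun \<Rightarrow> 'i set \<Rightarrow> (('i \<Rightarrow> bool) \<Rightarrow> bool) \<Rightarrow> bool" where
  "preserves f I R \<longleftrightarrow> (\<forall>cs. length cs = fst f \<longrightarrow> (\<forall>c\<in>set cs. R c) \<longrightarrow>
     (\<forall>i\<in>I. snd f (map (\<lambda>c. c i) cs) \<noteq> None) \<longrightarrow>
     R (\<lambda>i. the (snd f (map (\<lambda>c. c i) cs))))"

definition pol :: "'i set \<Rightarrow> (('i \<Rightarrow> bool) \<Rightarrow> bool) \<Rightarrow> pfun set" where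
  "pol I R = {f \<in> P2. preserves f I R}"

lemma preserves_proj:
  assumes "i < n" shows "preserves (proj n i) I R"
  unfolding preserves_def
proof (intro allI impI)
  fix cs assume "length cs = fst (proj n i)" and "\<forall>c\<in>set cs. R c"
  moreover from this have "(\<lambda>j. the (snd (proj n i) (map (\<lambda>c. c j) cs))) = cs ! i"
    using assms by (auto simp: proj_def)
  ultimately show "R (\<lambda>j. the (snd (proj n i) (map (\<lambda>c. c j) cs)))"
    using assms by (simp add: proj_def)
qed

lemma preserves_restriction:
  assumes R: "depends_only_on I R" and f: "preserves f I R" and g: "restriction_of g f"
  shows "preserves g I R"
  unfolding preserves_def
proof (intro allI impI)
  fix cs assume cs: "length cs = fst g" "\<forall>c\<in>set cs. R c"
    and dom: "\<forall>i\<in>I. snd g (map (\<lambda>c. c i) cs) \<noteq> None"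
  have agree: "\<forall>i\<in>I. snd f (map (\<lambda>c. c i) cs) = snd g (map (\<lambda>c. c i) cs)"
    using dom g unfolding restriction_of_def by force
  moreover have "length cs = fst f" using cs g by (simp add: restriction_of_def)
  ultimately have "R (\<lambda>i. the (snd f (map (\<lambda>c. c i) cs)))"
    using f cs dom unfolding preserves_def by simp
  then show "R (\<lambda>i. the (snd g (map (\<lambda>c. c i) cs)))"
    using R agree unfolding depends_only_on_def by (metis (no_types, lifting))
qed

lemma preserves_compose:
  assumes R: "depends_only_on I R" and f: "preserves f I R" and "length gs = fst f"
    and gs: "\<forall>g\<in>set gs. preserves g I R \<and> fst g = m"
  shows "preserves (Defs.compose f gs m) I R"
  unfolding preserves_def
proof (intro allI impI)
  fix cs assume "length cs = fst (Defs.compose f gs m)" and cs: "\<forall>c\<in>set cs. R c"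
    and dom: "\<forall>i\<in>I. snd (Defs.compose f gs m) (map (\<lambda>c. c i) cs) \<noteq> None"
  then have m: "length cs = m" by (simp add: Defs.compose_def)
  define ds where "ds = map (\<lambda>g i. the (snd g (map (\<lambda>c. c i) cs))) gs"
  have rows: "map (\<lambda>d. d i) ds = map (\<lambda>g. the (snd g (map (\<lambda>c. c i) cs))) gs" for i
    by (simp add: ds_def)
  have inner: "\<forall>g\<in>set gs. snd g (map (\<lambda>c. c i) cs) \<noteq> None" if "i \<in> I" for i
    using dom that m by (auto simp: Defs.compose_def those_map_eq_None split: option.splits)
  have comp: "snd (Defs.compose f gs m) (map (\<lambda>c. c i) cs) = snd f (map (\<lambda>d. d i) ds)"
    if "i \<in> I" for i
    using snd_compose_eq[OF _ inner[OF that]] m rows by simp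
  have "\<forall>d\<in>set ds. R d"
    using gs cs m inner unfolding ds_def preserves_def by auto
  moreover have "length ds = fst f" by (simp add: ds_def \<open>length gs = fst f\<close>)
  moreover have "\<forall>i\<in>I. snd f (map (\<lambda>d. d i) ds) \<noteq> None" using dom comp by simp
  ultimately have "R (\<lambda>i. the (snd f (map (\<lambda>d. d i) ds)))"
    using f unfolding preserves_def by blast
  then show "R (\<lambda>i. the (snd (Defs.compose f gs m) (map (\<lambda>c. c i) cs)))"
    using R comp unfolding depends_only_on_def by (metis (no_types, lifting))
qed

lemma partial_clone_pol:
  assumes R: "depends_only_on I R" shows "partial_clone (pol I R)"
  unfolding partial_clone_def
proof (intro conjI allI impI)
  show "pol I R \<subseteq> P2" by (auto simp: pol_def)
next
  fix n i :: nat assume "1 \<le> n" "i < n"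
  then show "proj n i \<in> pol I R"
    using proj_in_O2 preserves_proj by (auto simp: pol_def O2_def)
next
  fix f gs m assume "f \<in> pol I R" "length gs = fst f" "\<forall>g\<in>set gs. g \<in> pol I R \<and> fst g = m"
  then show "Defs.compose f gs m \<in> pol I R"
    using compose_in_P2[of f gs m] preserves_compose[OF R, of f gs m] by (auto simp: pol_def)
qed

lemma strong_pol:
  assumes "depends_only_on I R" shows "strong (pol I R)"
  unfolding strong_def pol_def
  using preserves_restriction[OF assms] by (auto simp: restriction_of_def)

lemma partial_clone_Inter:
  assumes "\<X> \<noteq> {}" and clones: "\<And>X. X \<in> \<X> \<Longrightarrow> partial_clone X"
  shows "partial_clone (\<Inter>\<X>)"
  unfolding partial_clone_def
proof (intro conjI allI impI)
  obtain X where "X \<in> \<X>" using assms(1) by blast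
  then show "\<Inter>\<X> \<subseteq> P2" using clones[of X] unfolding partial_clone_def by blast
next
  fix n i :: nat assume "1 \<le> n" "i < n"
  then show "proj n i \<in> \<Inter>\<X>" using clones by (simp add: partial_clone_def)
next
  fix f gs m assume f: "f \<in> \<Inter>\<X>" and "length gs = fst f"
    and gs: "\<forall>g\<in>set gs. g \<in> \<Inter>\<X> \<and> fst g = m"
  show "Defs.compose f gs m \<in> \<Inter>\<X>"
  proof
    fix X assume "X \<in> \<X>"
    then have "partial_clone X" "f \<in> X" "\<forall>g\<in>set gs. g \<in> X \<and> fst g = m"
      using clones f gs by auto
    then show "Defs.compose f gs m \<in> X"
      using \<open>length gs = fst f\<close> unfolding partial_clone_def by blast
  qed
qed

lemma strong_Inter: "(\<And>X. X \<in> \<X> \<Longrightarrow> strong X) \<Longrightarrow> strong (\<Inter>\<X>)"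
  unfolding strong_def by blast

section \<open>The clone \<open>\<Lambda> \<inter> T\<^sub>1\<close> of conjunctions\<close>

definition meet :: "bool list \<Rightarrow> bool list \<Rightarrow> bool list" where
  "meet a b = map2 (\<and>) a b"

lemma meet_map: "meet (map p xs) (map q xs) = map (\<lambda>x. p x \<and> q x) xs"
  by (induction xs) (auto simp: meet_def)

definition meet_hom :: "pfun \<Rightarrow> bool" where
  "meet_hom f \<longleftrightarrow> (\<forall>a b. length a = fst f \<longrightarrow> length b = fst f \<longrightarrow>
      the (snd f (meet a b)) = (the (snd f a) \<and> the (snd f b)))"

lemma compose_meet_hom:
  assumes f: "f \<in> O2" "meet_hom f" and "length gs = fst f"
    and gs: "\<forall>g\<in>set gs. g \<in> O2 \<and> meet_hom g \<and> fst g = m"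
  shows "meet_hom (Defs.compose f gs m)"
  unfolding meet_hom_def
proof (intro allI impI)
  fix a b :: "bool list"
  assume "length a = fst (Defs.compose f gs m)" "length b = fst (Defs.compose f gs m)"
  then have a: "length a = m" and b: "length b = m" by (auto simp: Defs.compose_def)
  have val: "snd (Defs.compose f gs m) xs = snd f (map (\<lambda>g. the (snd g xs)) gs)"
    if "length xs = m" for xs
    using gs that by (intro snd_compose_eq) (auto simp: O2_iff)
  have "map (\<lambda>g. the (snd g (meet a b))) gs = map (\<lambda>g. the (snd g a) \<and> the (snd g b)) gs"
    using gs a b unfolding meet_hom_def by auto
  also have "\<dots> = meet (map (\<lambda>g. the (snd g a)) gs) (map (\<lambda>g. the (snd g b)) gs)"
    by (simp add: meet_map)
  finally show "the (snd (Defs.compose f gs m) (meet a b)) =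
      (the (snd (Defs.compose f gs m) a) \<and> the (snd (Defs.compose f gs m) b))"
    using val[of "meet a b"] val[OF a] val[OF b] a b f \<open>length gs = fst f\<close>
    by (simp add: meet_hom_def meet_def)
qed

lemma Lambda_total_meet_hom:
  assumes "f \<in> Lambda" shows "f \<in> O2 \<and> meet_hom f"
  using assms unfolding Lambda_def
proof (induction rule: clone_gen.induct)
  case (gen f)
  then show ?case
    unfolding and2_def const1_def O2_iff meet_hom_def by (auto simp: meet_def split: if_splits)
next
  case (proj n i)
  then show ?case unfolding O2_iff meet_hom_def proj_def by (auto simp: meet_def)
next
  case (comp f gs m)
  then have "\<forall>g\<in>set gs. g \<in> O2 \<and> meet_hom g \<and> fst g = m" by blast
  then show ?case
    using comp.IH comp.hyps(2) compose_in_O2[of f gs m] compose_meet_hom[of f gs m] by simp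
qed

definition conj_fun :: "nat \<Rightarrow> nat set \<Rightarrow> pfun" where
  "conj_fun n B = (n, \<lambda>xs. if length xs = n then Some (\<forall>i\<in>B. xs ! i) else None)"

lemma conj_fun_in_O2: "1 \<le> n \<Longrightarrow> conj_fun n B \<in> O2"
  unfolding O2_iff conj_fun_def by auto

definition zeros_at :: "nat \<Rightarrow> nat set \<Rightarrow> bool list" where
  "zeros_at n F = map (\<lambda>i. i \<notin> F) [0..<n]"

lemma length_zeros_at [simp]: "length (zeros_at n F) = n"
  by (simp add: zeros_at_def)

lemma zeros_at_insert: "zeros_at n (insert i F) = meet (zeros_at n F) (zeros_at n {i})"
  by (auto simp: zeros_at_def meet_def list_eq_iff_nth_eq)

lemma meet_hom_zeros_at:
  assumes f: "f \<in> O2" "meet_hom f" "snd f (replicate (fst f) True) = Some True"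
    and F: "finite F" "F \<subseteq> {..<fst f}"
  shows "snd f (zeros_at (fst f) F) =
    Some (\<forall>i\<in>F. the (snd f (zeros_at (fst f) {i})))"
  using F
proof (induction F rule: finite_induct)
  case empty
  then show ?case using f by (simp add: zeros_at_def map_replicate_const)
next
  case (insert i F)
  let ?v = "\<lambda>G. the (snd f (zeros_at (fst f) G))"
  have defined: "snd f (zeros_at (fst f) G) = Some (?v G)" for G
    using f(1) by (simp add: O2_iff)
  have "?v (insert i F) = (?v F \<and> ?v {i})"
    using f(2) zeros_at_insert[of "fst f" i F] unfolding meet_hom_def by simp
  then show ?case using insert defined[of "insert i F"] by auto
qed

lemma meet_hom_eq_conj_fun:
  assumes f: "f \<in> O2" "meet_hom f" "snd f (replicate (fst f) True) = Some True"
  shows "f = conj_fun (fst f) {i. i < fst f \<and> \<not> the (snd f (zeros_at (fst f) {i}))}"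
    (is "f = conj_fun ?n ?B")
proof (rule prod_eqI)
  show "snd f = snd (conj_fun ?n ?B)"
  proof
    fix xs :: "bool list"
    show "snd f xs = snd (conj_fun ?n ?B) xs"
    proof (cases "length xs = ?n")
      case True
      let ?Z = "{i. i < ?n \<and> \<not> xs ! i}"
      have "zeros_at ?n ?Z = xs" using True by (auto simp: zeros_at_def list_eq_iff_nth_eq)
      then have "snd f xs = Some (\<forall>i\<in>?Z. the (snd f (zeros_at ?n {i})))"
        using meet_hom_zeros_at[OF f, of ?Z] by auto
      then show ?thesis using True by (auto simp: conj_fun_def)
    next
      case False
      then show ?thesis using f(1) by (simp add: O2_def P2_def conj_fun_def)
    qed
  qed
qed (simp add: conj_fun_def)

lemma conj_fun_in_Lambda:
  assumes n: "1 \<le> n" and B: "B \<subseteq> {..<n}"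
  shows "conj_fun n B \<in> Lambda"
proof -
  have proj: "proj n i \<in> Lambda" if "i < n" for i
    using n that unfolding Lambda_def by (rule clone_gen.proj)
  have "finite B" using B finite_subset by blast
  then show ?thesis using B
  proof (induction B rule: finite_induct)
    case empty
    have "conj_fun n {} = Defs.compose (const1 True) [proj n 0] n"
      by (auto simp: conj_fun_def Defs.compose_def const1_def proj_def fun_eq_iff)
    moreover have "Defs.compose (const1 True) [proj n 0] n \<in> Lambda"
      using proj[of 0] n unfolding Lambda_def
      by (intro clone_gen.comp clone_gen.gen) (auto simp: const1_def proj_def)
    ultimately show ?case by simp
  next
    case (insert i B)
    have "snd (conj_fun n (insert i B)) xs = snd (Defs.compose and2 [conj_fun n B, proj n i] n) xs"
      for xs
      by (cases "length xs = n") (auto simp: conj_fun_def Defs.compose_def and2_def proj_def)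
    then have "conj_fun n (insert i B) = Defs.compose and2 [conj_fun n B, proj n i] n"
      by (simp add: prod_eq_iff fun_eq_iff conj_fun_def Defs.compose_def)
    moreover have "Defs.compose and2 [conj_fun n B, proj n i] n \<in> Lambda"
      using insert proj[of i] unfolding Lambda_def
      by (intro clone_gen.comp clone_gen.gen) (auto simp: and2_def proj_def conj_fun_def)
    ultimately show ?case by simp
  qed
qed

lemma Lambda_Int_T1_eq: "Lambda \<inter> T1 = {conj_fun n B | n B. 1 \<le> n \<and> B \<subseteq> {..<n}}"
proof
  show "Lambda \<inter> T1 \<subseteq> {conj_fun n B | n B. 1 \<le> n \<and> B \<subseteq> {..<n}}"
  proof
    fix f assume "f \<in> Lambda \<inter> T1"
    then have f: "f \<in> O2" "meet_hom f" "snd f (replicate (fst f) True) = Some True"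
      using Lambda_total_meet_hom unfolding T1_def by auto
    then show "f \<in> {conj_fun n B | n B. 1 \<le> n \<and> B \<subseteq> {..<n}}"
      using meet_hom_eq_conj_fun[OF f] by (auto simp: O2_iff)
  qed
next
  have "conj_fun n B \<in> T1" if "1 \<le> n" "B \<subseteq> {..<n}" for n B
    using that conj_fun_in_O2 by (auto simp: T1_def conj_fun_def subset_iff)
  then show "{conj_fun n B | n B. 1 \<le> n \<and> B \<subseteq> {..<n}} \<subseteq> Lambda \<inter> T1"
    using conj_fun_in_Lambda by blast
qed

section \<open>A family of strong partial clones over \<open>\<Lambda> \<inter> T\<^sub>1\<close>\<close>

definition conj_closed :: "(('i \<Rightarrow> bool) \<Rightarrow> bool) \<Rightarrow> bool" where
  "conj_closed R \<longleftrightarrow> (\<forall>J (u :: nat \<Rightarrow> 'i \<Rightarrow> bool). (\<forall>j\<in>J. R (u j)) \<longrightarrow> R (\<lambda>i. \<forall>j\<in>J. u j i))"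

lemma preserves_conj_fun:
  assumes "B \<subseteq> {..<n}" and R: "conj_closed R"
  shows "preserves (conj_fun n B) I R"
  unfolding preserves_def
proof (intro allI impI)
  fix cs assume "length cs = fst (conj_fun n B)" and cs: "\<forall>c\<in>set cs. R c"
  then have "(\<lambda>i. the (snd (conj_fun n B) (map (\<lambda>c. c i) cs))) = (\<lambda>i. \<forall>j\<in>B. (cs ! j) i)"
    and "\<forall>j\<in>B. R (cs ! j)"
    using assms(1) by (auto simp: conj_fun_def subset_iff)
  then show "R (\<lambda>i. the (snd (conj_fun n B) (map (\<lambda>c. c i) cs)))"
    using R unfolding conj_closed_def by simp
qed

definition and_coords :: "nat set" where
  "and_coords = {0, 1, 2, 3}"

definition and_rel :: "(nat \<Rightarrow> bool) \<Rightarrow> bool" where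
  "and_rel v \<longleftrightarrow> v 2 = (v 0 \<and> v 1) \<and> v 3"

definition avoid_coords :: "nat \<Rightarrow> nat set set" where
  "avoid_coords n = {Z. Z \<subseteq> {..<n} \<and> card Z = 2} \<union> {{..<n}}"

definition avoid_rel :: "nat \<Rightarrow> (nat set \<Rightarrow> bool) \<Rightarrow> bool" where
  "avoid_rel n v \<longleftrightarrow> (\<exists>A. \<forall>Z\<in>avoid_coords n. v Z \<longleftrightarrow> Z \<inter> A = {})"

lemma depends_only_on_and_rel: "depends_only_on and_coords and_rel"
  unfolding depends_only_on_def and_coords_def and_rel_def by auto

lemma depends_only_on_avoid_rel: "depends_only_on (avoid_coords n) (avoid_rel n)"
  unfolding depends_only_on_def avoid_rel_def by metis

lemma conj_closed_and_rel: "conj_closed and_rel"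
  unfolding conj_closed_def and_rel_def by blast

lemma conj_closed_avoid_rel: "conj_closed (avoid_rel n)"
  unfolding conj_closed_def
proof (intro allI impI)
  fix J and u :: "nat \<Rightarrow> nat set \<Rightarrow> bool" assume "\<forall>j\<in>J. avoid_rel n (u j)"
  then obtain A where "\<forall>j\<in>J. \<forall>Z\<in>avoid_coords n. u j Z \<longleftrightarrow> Z \<inter> A j = {}"
    unfolding avoid_rel_def by metis
  then have "\<forall>Z\<in>avoid_coords n. (\<forall>j\<in>J. u j Z) \<longleftrightarrow> Z \<inter> (\<Union>j\<in>J. A j) = {}"
    by blast
  then show "avoid_rel n (\<lambda>Z. \<forall>j\<in>J. u j Z)" unfolding avoid_rel_def by blast
qed

text \<open>Feed in the columns \<open>(a\<^sub>i, b\<^sub>i, a\<^sub>i \<and> b\<^sub>i, 1)\<close>.\<close>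

lemma total_preserves_and_rel:
  assumes f: "f \<in> O2" and pres: "preserves f and_coords and_rel"
  shows "meet_hom f \<and> snd f (replicate (fst f) True) = Some True"
proof -
  let ?n = "fst f"
  have key: "the (snd f (meet a b)) = (the (snd f a) \<and> the (snd f b))
      \<and> the (snd f (replicate ?n True))"
    if a: "length a = ?n" and b: "length b = ?n" for a b
  proof -
    define cs where "cs = map (\<lambda>i x::nat. if x = 0 then a ! i else if x = 1 then b ! i
        else if x = 2 then a ! i \<and> b ! i else True) [0..<?n]"
    have rows: "map (\<lambda>c. c 0) cs = a" "map (\<lambda>c. c 1) cs = b"
      "map (\<lambda>c. c 2) cs = meet a b" "map (\<lambda>c. c 3) cs = replicate ?n True"
      using a b by (auto simp: cs_def meet_def list_eq_iff_nth_eq)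
    have "length cs = ?n" "\<forall>c\<in>set cs. and_rel c" by (auto simp: cs_def and_rel_def)
    moreover have "\<forall>x\<in>and_coords. snd f (map (\<lambda>c. c x) cs) \<noteq> None"
      using f \<open>length cs = ?n\<close> by (auto simp: O2_iff)
    ultimately have "and_rel (\<lambda>x. the (snd f (map (\<lambda>c. c x) cs)))"
      using pres unfolding preserves_def by blast
    then show ?thesis using rows unfolding and_rel_def by simp
  qed
  then have "meet_hom f" unfolding meet_hom_def by blast
  moreover have "snd f (replicate ?n True) \<noteq> None" using f by (simp add: O2_iff)
  moreover have "the (snd f (replicate ?n True))"
    using key[of "replicate ?n True" "replicate ?n True"] by simp
  ultimately show ?thesis by auto
qed

text \<open>The shift by 5 keeps all arities in the range where \<open>two_zeros_fun\<close> separates the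
  relations \<open>avoid_rel\<close>.\<close>

definition pol_clone :: "nat set \<Rightarrow> pfun set" where
  "pol_clone S = \<Inter> (insert (pol and_coords and_rel)
     ((\<lambda>k. pol (avoid_coords (k + 5)) (avoid_rel (k + 5))) ` S))"

lemma partial_clone_pol_clone: "partial_clone (pol_clone S)"
  unfolding pol_clone_def
  by (rule partial_clone_Inter)
    (auto intro: partial_clone_pol depends_only_on_and_rel depends_only_on_avoid_rel)

lemma strong_pol_clone: "strong (pol_clone S)"
  unfolding pol_clone_def
  by (rule strong_Inter) (auto intro: strong_pol depends_only_on_and_rel depends_only_on_avoid_rel)

lemma pol_clone_Int_O2: "pol_clone S \<inter> O2 = Lambda \<inter> T1"
proof
  show "pol_clone S \<inter> O2 \<subseteq> Lambda \<inter> T1"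
  proof
    fix f assume "f \<in> pol_clone S \<inter> O2"
    then have f: "f \<in> O2" "preserves f and_coords and_rel" by (auto simp: pol_clone_def pol_def)
    then have "f = conj_fun (fst f) {i. i < fst f \<and> \<not> the (snd f (zeros_at (fst f) {i}))}"
      using meet_hom_eq_conj_fun total_preserves_and_rel by blast
    then show "f \<in> Lambda \<inter> T1" using f(1) unfolding Lambda_Int_T1_eq O2_iff by blast
  qed
next
  show "Lambda \<inter> T1 \<subseteq> pol_clone S \<inter> O2"
  proof
    fix f assume "f \<in> Lambda \<inter> T1"
    then obtain n B where f: "f = conj_fun n B" "1 \<le> n" "B \<subseteq> {..<n}"
      unfolding Lambda_Int_T1_eq by blast
    then have "f \<in> O2" using conj_fun_in_O2 by blast
    moreover have "f \<in> pol and_coords and_rel"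
      using \<open>f \<in> O2\<close> preserves_conj_fun[OF f(3) conj_closed_and_rel] f(1)
      by (simp add: pol_def O2_def)
    moreover have "f \<in> pol (avoid_coords k) (avoid_rel k)" for k
      using \<open>f \<in> O2\<close> preserves_conj_fun[OF f(3) conj_closed_avoid_rel] f(1)
      by (simp add: pol_def O2_def)
    ultimately show "f \<in> pol_clone S \<inter> O2" unfolding pol_clone_def by blast
  qed
qed

lemma pol_clone_in_I_str: "pol_clone S \<in> I_str (Lambda \<inter> T1)"
  unfolding I_str_def using partial_clone_pol_clone strong_pol_clone pol_clone_Int_O2 by blast

section \<open>Separating the clones\<close>

lemma card_UN_pairwise_card_2:
  assumes I: "finite I" "2 \<le> card I"
    and pairs: "\<And>i j. i \<in> I \<Longrightarrow> j \<in> I \<Longrightarrow> i \<noteq> j \<Longrightarrow> card (X i \<union> X j) = 2"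
  shows "card (\<Union>i\<in>I. X i) = 2 \<or> card (\<Union>i\<in>I. X i) = card I"
proof -
  have other: "\<exists>j\<in>I. j \<noteq> i" for i
  proof (rule ccontr)
    assume "\<not> (\<exists>j\<in>I. j \<noteq> i)"
    then have "I \<subseteq> {i}" by blast
    then show False using I card_mono[of "{i}" I] by simp
  qed
  have fin: "finite (X i)" and le2: "card (X i) \<le> 2" if "i \<in> I" for i
  proof -
    obtain j where "j \<in> I" "j \<noteq> i" using other by blast
    then have "card (X i \<union> X j) = 2" using pairs that by blast
    then have "finite (X i \<union> X j)" by (intro card_ge_0_finite) simp
    then show "finite (X i)" "card (X i) \<le> 2"
      using card_mono[of "X i \<union> X j" "X i"] \<open>card (X i \<union> X j) = 2\<close> by auto
  qed
  show ?thesis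
  proof (cases "\<exists>i\<in>I. card (X i) = 2")
    case True
    then obtain i where i: "i \<in> I" "card (X i) = 2" by blast
    have "X j \<subseteq> X i" if "j \<in> I" for j
    proof (cases "j = i")
      case False
      then have "X i = X i \<union> X j"
        using card_subset_eq[of "X i \<union> X j" "X i"] pairs[OF i(1) that] i fin that by auto
      then show ?thesis by blast
    qed simp
    then have "(\<Union>i\<in>I. X i) = X i" using i(1) by blast
    then show ?thesis using i(2) by simp
  next
    case False
    have le1: "card (X i) \<le> 1" if "i \<in> I" for i
    proof -
      have "card (X i) \<noteq> 2" using False that by blast
      then show ?thesis using le2[OF that] by linarith
    qed
    have single: "card (X i) = 1" if "i \<in> I" for i
    proof -
      obtain j where "j \<in> I" "j \<noteq> i" using other by blast
      then have "2 \<le> card (X i) + card (X j)"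
        using pairs[OF that] card_Un_le[of "X i" "X j"] by fastforce
      then show ?thesis using le1[OF that] le1[OF \<open>j \<in> I\<close>] by linarith
    qed
    define g where "g i = the_elem (X i)" for i
    have Xg: "X i = {g i}" if i: "i \<in> I" for i
    proof -
      obtain x where "X i = {x}" using single[OF i] by (rule card_1_singletonE)
      then show ?thesis by (simp add: g_def)
    qed
    have "inj_on g I"
    proof (rule inj_onI, rule ccontr)
      fix i j assume "i \<in> I" "j \<in> I" "g i = g j" "i \<noteq> j"
      then have "card (X i \<union> X j) = 2" "X i \<union> X j = {g i}" using pairs[of i j] Xg by auto
      then show False by simp
    qed
    moreover have "(\<Union>i\<in>I. X i) = g ` I" using Xg by auto
    ultimately show ?thesis by (simp add: card_image)
  qed
qed

lemma avoid_coords_cases: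
  assumes "Z \<in> avoid_coords n"
  obtains "Z = {..<n}" | a b where "a < n" "b < n" "a \<noteq> b" "Z = {a, b}"
  using assms unfolding avoid_coords_def by (auto simp: card_2_iff)

lemma pair_in_avoid_coords: "a < n \<Longrightarrow> b < n \<Longrightarrow> a \<noteq> b \<Longrightarrow> {a, b} \<in> avoid_coords n"
  unfolding avoid_coords_def by auto

lemma full_in_avoid_coords: "{..<n} \<in> avoid_coords n"
  unfolding avoid_coords_def by auto

text \<open>Here \<open>X i \<subseteq> {..<m}\<close> collects the columns whose set \<open>A\<^sub>j\<close> contains \<open>i\<close>, so that
  \<open>\<Union>(X ` Z)\<close> is the set of zeros of row \<open>Z\<close>; the hypothesis says that this row lies in the domain
  of \<open>two_zeros_fun m\<close>.  The witness consists of the points all of whose pairs are mapped to the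
  all-zero row.  At the full coordinate \<open>m \<noteq> n\<close> is essential: for \<open>m = n\<close> distinct singletons
  \<open>X i\<close> give value 1 on every pair but 0 on \<open>{..<n}\<close>, which no avoided set realises.\<close>

lemma exists_avoided_set:
  fixes X :: "nat \<Rightarrow> nat set"
  assumes "5 \<le> m" "2 \<le> n" "m \<noteq> n" and X: "\<And>i. X i \<subseteq> {..<m}"
    and dom: "\<And>Z. Z \<in> avoid_coords n \<Longrightarrow> card (\<Union>(X ` Z)) = 2 \<or> \<Union>(X ` Z) = {..<m}"
  shows "\<exists>A. \<forall>Z\<in>avoid_coords n. card (\<Union>(X ` Z)) = 2 \<longleftrightarrow> Z \<inter> A = {}"
proof
  define A where "A = {i. i < n \<and> (\<forall>j<n. j \<noteq> i \<longrightarrow> card (X i \<union> X j) \<noteq> 2)}"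
  have fin: "finite (X i)" for i using X finite_subset by blast
  have two_iff: "card (\<Union>(X ` Z)) = 2 \<longleftrightarrow> \<Union>(X ` Z) \<noteq> {..<m}" if "Z \<in> avoid_coords n" for Z
    using dom[OF that] \<open>5 \<le> m\<close> by auto
  have small: "card (X i) \<le> 2" if i: "i < n" "i \<notin> A" for i
  proof -
    obtain j where "card (X i \<union> X j) = 2" using i by (auto simp: A_def)
    then show ?thesis using card_mono[OF finite_UnI[OF fin fin] Un_upper1, of i j] by simp
  qed
  have pair: "card (X a \<union> X b) = 2 \<longleftrightarrow> a \<notin> A \<and> b \<notin> A"
    if ab: "a < n" "b < n" "a \<noteq> b" for a b
  proof
    assume "card (X a \<union> X b) = 2"
    moreover from this have "card (X b \<union> X a) = 2" by (simp add: Un_commute)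
    ultimately show "a \<notin> A \<and> b \<notin> A" using ab unfolding A_def by blast
  next
    assume "a \<notin> A \<and> b \<notin> A"
    then have "card (X a) \<le> 2" "card (X b) \<le> 2" using small ab by auto
    then have "card (X a \<union> X b) \<le> 4" using card_Un_le[of "X a" "X b"] by linarith
    then have "X a \<union> X b \<noteq> {..<m}" using \<open>5 \<le> m\<close> by (intro notI) simp
    then show "card (X a \<union> X b) = 2" using two_iff[OF pair_in_avoid_coords[OF ab]] by simp
  qed
  have full: "card (\<Union>(X ` {..<n})) = 2 \<longleftrightarrow> {..<n} \<inter> A = {}"
  proof
    assume card2: "card (\<Union>(X ` {..<n})) = 2"
    show "{..<n} \<inter> A = {}"
    proof (rule ccontr)
      assume "{..<n} \<inter> A \<noteq> {}"
      then obtain a where a: "a < n" "a \<in> A" by auto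
      define b where "b = (if a = 0 then 1 else 0 :: nat)"
      have b: "b < n" "b \<noteq> a" using \<open>2 \<le> n\<close> by (auto simp: b_def)
      then have "X a \<union> X b = {..<m}"
        using pair[OF a(1) b(1)] a(2) two_iff[OF pair_in_avoid_coords[OF a(1) b(1)]] by auto
      moreover have "X a \<union> X b \<subseteq> \<Union>(X ` {..<n})" using a b by auto
      ultimately have "m \<le> card (\<Union>(X ` {..<n}))"
        using card_mono[OF finite_UN_I] fin by (metis card_lessThan finite_lessThan)
      then show False using card2 \<open>5 \<le> m\<close> by simp
    qed
  next
    assume "{..<n} \<inter> A = {}"
    then have "card (X i \<union> X j) = 2" if "i \<in> {..<n}" "j \<in> {..<n}" "i \<noteq> j" for i j
      using pair that by auto
    then have "card (\<Union>(X ` {..<n})) = 2 \<or> card (\<Union>(X ` {..<n})) = n"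
      using card_UN_pairwise_card_2[of "{..<n}" X] \<open>2 \<le> n\<close> by simp
    then show "card (\<Union>(X ` {..<n})) = 2"
      using two_iff[OF full_in_avoid_coords] \<open>m \<noteq> n\<close> by auto
  qed
  show "\<forall>Z\<in>avoid_coords n. card (\<Union>(X ` Z)) = 2 \<longleftrightarrow> Z \<inter> A = {}"
  proof
    fix Z assume "Z \<in> avoid_coords n"
    then show "card (\<Union>(X ` Z)) = 2 \<longleftrightarrow> Z \<inter> A = {}"
      by (cases rule: avoid_coords_cases) (use full pair in auto)
  qed
qed

definition zeros :: "bool list \<Rightarrow> nat set" where
  "zeros xs = {i. i < length xs \<and> \<not> xs ! i}"

definition two_zeros_fun :: "nat \<Rightarrow> pfun" where
  "two_zeros_fun m = (m, \<lambda>xs. if length xs = m \<and> (card (zeros xs) = 2 \<or> zeros xs = {..<m})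
     then Some (card (zeros xs) = 2) else None)"

lemma two_zeros_fun_in_P2: "1 \<le> m \<Longrightarrow> two_zeros_fun m \<in> P2"
  unfolding P2_def two_zeros_fun_def by auto

text \<open>The row at coordinate 3 is all ones, which lies outside the domain.\<close>

lemma preserves_two_zeros_fun_and_rel:
  assumes "1 \<le> m" shows "preserves (two_zeros_fun m) and_coords and_rel"
  unfolding preserves_def
proof (intro allI impI)
  fix cs assume "\<forall>c\<in>set cs. and_rel c"
    and dom: "\<forall>x\<in>and_coords. snd (two_zeros_fun m) (map (\<lambda>c. c x) cs) \<noteq> None"
  then have "zeros (map (\<lambda>c. c 3) cs) = {}"
    by (auto simp: zeros_def and_rel_def)
  moreover have "{} \<noteq> {..<m}" using assms by (metis lessThan_empty_iff not_one_le_zero)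
  ultimately have "snd (two_zeros_fun m) (map (\<lambda>c. c 3) cs) = None"
    by (simp add: two_zeros_fun_def)
  then show "and_rel (\<lambda>x. the (snd (two_zeros_fun m) (map (\<lambda>c. c x) cs)))"
    using dom by (simp add: and_coords_def)
qed

text \<open>Columns \<open>i \<notin> Z\<close>, avoiding \<open>{i}\<close>, give rows with zero set \<open>Z\<close>; the result would have to avoid a set
  meeting \<open>{..<m}\<close> but none of its pairs.\<close>

lemma not_preserves_two_zeros_fun_avoid_rel:
  assumes "3 \<le> m" shows "\<not> preserves (two_zeros_fun m) (avoid_coords m) (avoid_rel m)"
proof
  assume pres: "preserves (two_zeros_fun m) (avoid_coords m) (avoid_rel m)"
  define cs where "cs = map (\<lambda>i Z. i \<notin> Z) [0..<m]"
  have "\<forall>c\<in>set cs. avoid_rel m c"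
    unfolding cs_def avoid_rel_def by (auto intro!: exI[where x = "{_}"])
  moreover have val: "snd (two_zeros_fun m) (map (\<lambda>c. c Z) cs) = Some (card Z = 2)"
    if "Z \<in> avoid_coords m" for Z
  proof -
    have "zeros (map (\<lambda>c. c Z) cs) = Z" using that by (auto simp: zeros_def cs_def avoid_coords_def)
    then show ?thesis using that by (auto simp: two_zeros_fun_def cs_def avoid_coords_def)
  qed
  moreover have "length cs = fst (two_zeros_fun m)" by (simp add: cs_def two_zeros_fun_def)
  ultimately have "avoid_rel m (\<lambda>Z. the (snd (two_zeros_fun m) (map (\<lambda>c. c Z) cs)))"
    using pres unfolding preserves_def by simp
  then obtain A where A: "\<forall>Z\<in>avoid_coords m. card Z = 2 \<longleftrightarrow> Z \<inter> A = {}"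
    using val unfolding avoid_rel_def by auto
  then have "{..<m} \<inter> A \<noteq> {}" using full_in_avoid_coords[of m] \<open>3 \<le> m\<close> by auto
  then obtain a where a: "a < m" "a \<in> A" by blast
  define b where "b = (if a = 0 then 1 else 0 :: nat)"
  have "b < m" "b \<noteq> a" using \<open>3 \<le> m\<close> by (auto simp: b_def)
  then show False using A pair_in_avoid_coords[OF a(1), of b] a by auto
qed

lemma preserves_two_zeros_fun_avoid_rel:
  assumes "5 \<le> m" "5 \<le> n" "m \<noteq> n"
  shows "preserves (two_zeros_fun m) (avoid_coords n) (avoid_rel n)"
  unfolding preserves_def
proof (intro allI impI)
  fix cs assume "length cs = fst (two_zeros_fun m)" and cs: "\<forall>c\<in>set cs. avoid_rel n c"
    and dom: "\<forall>Z\<in>avoid_coords n. snd (two_zeros_fun m) (map (\<lambda>c. c Z) cs) \<noteq> None"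
  then have len: "length cs = m" by (simp add: two_zeros_fun_def)
  have "\<forall>j<m. \<exists>A. \<forall>Z\<in>avoid_coords n. (cs ! j) Z \<longleftrightarrow> Z \<inter> A = {}"
    using cs len nth_mem unfolding avoid_rel_def by blast
  then obtain A where A: "\<forall>j<m. \<forall>Z\<in>avoid_coords n. (cs ! j) Z \<longleftrightarrow> Z \<inter> A j = {}"
    by metis
  define X where "X i = {j. j < m \<and> i \<in> A j}" for i
  have zeros_row: "zeros (map (\<lambda>c. c Z) cs) = \<Union>(X ` Z)" if "Z \<in> avoid_coords n" for Z
    using A that len by (auto simp: zeros_def X_def)
  have row_value: "snd (two_zeros_fun m) (map (\<lambda>c. c Z) cs) = Some (card (zeros (map (\<lambda>c. c Z) cs)) = 2)"
    and row_defined: "card (zeros (map (\<lambda>c. c Z) cs)) = 2 \<or> zeros (map (\<lambda>c. c Z) cs) = {..<m}"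
    if "Z \<in> avoid_coords n" for Z
    using dom that len by (auto simp: two_zeros_fun_def split: if_splits)
  have row: "snd (two_zeros_fun m) (map (\<lambda>c. c Z) cs) = Some (card (\<Union>(X ` Z)) = 2)"
    and "card (\<Union>(X ` Z)) = 2 \<or> \<Union>(X ` Z) = {..<m}"
    if "Z \<in> avoid_coords n" for Z
    using row_value[OF that] row_defined[OF that] zeros_row[OF that] by simp_all
  then obtain A' where "\<forall>Z\<in>avoid_coords n. card (\<Union>(X ` Z)) = 2 \<longleftrightarrow> Z \<inter> A' = {}"
    using exists_avoided_set[of m n X] assms by (auto simp: X_def)
  then show "avoid_rel n (\<lambda>Z. the (snd (two_zeros_fun m) (map (\<lambda>c. c Z) cs)))"
    unfolding avoid_rel_def using row by auto
qed

lemma two_zeros_fun_in_pol_clone_iff: "two_zeros_fun (k + 5) \<in> pol_clone S \<longleftrightarrow> k \<notin> S"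
proof
  assume "two_zeros_fun (k + 5) \<in> pol_clone S"
  then have "preserves (two_zeros_fun (k + 5)) (avoid_coords (j + 5)) (avoid_rel (j + 5))" if "j \<in> S" for j
    using that by (auto simp: pol_clone_def pol_def)
  then show "k \<notin> S" using not_preserves_two_zeros_fun_avoid_rel[of "k + 5"] by auto
next
  assume "k \<notin> S"
  then have "preserves (two_zeros_fun (k + 5)) (avoid_coords (j + 5)) (avoid_rel (j + 5))"
    if "j \<in> S" for j
    using that by (intro preserves_two_zeros_fun_avoid_rel) auto
  then show "two_zeros_fun (k + 5) \<in> pol_clone S"
    using two_zeros_fun_in_P2[of "k + 5"] preserves_two_zeros_fun_and_rel[of "k + 5"]
    by (auto simp: pol_clone_def pol_def)
qed

lemma inj_pol_clone: "inj pol_clone"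
  by (rule injI) (metis two_zeros_fun_in_pol_clone_iff subsetI subset_antisym)

lemma countable_P2: "countable P2"
proof (rule countableI')
  show "inj_on (\<lambda>f. (fst f, map (snd f) (List.n_lists (fst f) [True, False]))) P2"
  proof (rule inj_onI)
    fix f g assume "f \<in> P2" "g \<in> P2"
      and eq: "(fst f, map (snd f) (List.n_lists (fst f) [True, False])) =
        (fst g, map (snd g) (List.n_lists (fst g) [True, False]))"
    have "snd f xs = snd g xs" for xs
    proof (cases "length xs = fst f")
      case True
      then have "xs \<in> set (List.n_lists (fst f) [True, False])" by (auto simp: set_n_lists)
      then show ?thesis using eq by (auto simp: map_eq_conv)
    next
      case False
      then show ?thesis using \<open>f \<in> P2\<close> \<open>g \<in> P2\<close> eq by (auto simp: P2_def)
    qed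
    then show "f = g" using eq by (simp add: prod_eq_iff fun_eq_iff)
  qed
qed

lemma I_str_lepoll_nat_sets: "I_str C \<lesssim> (UNIV :: nat set set)"
proof -
  obtain e :: "pfun \<Rightarrow> nat" where "inj_on e P2" using countable_P2 by (rule countableE)
  moreover have "I_str C \<subseteq> Pow P2" by (auto simp: I_str_def partial_clone_def)
  ultimately have "inj_on (image e) (I_str C)" by (meson inj_on_image_Pow inj_on_subset)
  then show ?thesis unfolding lepoll_def by blast
qed

theorem mainTheorem6:
  shows "\<exists>h. bij_betw h (I_str (Lambda \<inter> T1)) (UNIV :: real set)"
proof -
  have "(UNIV :: nat set set) \<lesssim> I_str (Lambda \<inter> T1)"
    unfolding lepoll_def using inj_pol_clone pol_clone_in_I_str by blast
  then have "I_str (Lambda \<inter> T1) \<approx> (UNIV :: nat set set)"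
    using lepoll_antisym I_str_lepoll_nat_sets by blast
  then show ?thesis using nat_sets_eqpoll_reals eqpoll_trans unfolding eqpoll_def by blast
qed

end
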